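(* Let $X$ be a random vector in $\mathbb{R}^n$, let $m\ge1$ be an integer and let $x\in\mathcal{C}_m(X)$. Then, for any norm $\|\cdot\|$ on $\mathbb{R}^n$, $$\mathbb{E}\left[\frac{1}{\|X-x\|^m}\right]=+\infty.$$
   Context: For a random vector $X$ in $\mathbb{R}^n$ and an integer $m\ge0$, the $m$-dimensional mould $\mathcal{C}_m(X)$ is the set of all $x\in\mathbb{R}^n$ such that $\liminf_{\epsilon\to0^+}\mathbb{P}(\|X-x\|_2<\epsilon)/\epsilon^m>0$ (this set does not change if $\|\cdot\|_2$ is replaced by any other norm on $\mathbb{R}^n$). *)

theory Defs
  imports "HOL-Probability.Probability"
begin

definition mould :: "'b measure \<Rightarrow> ('b \<Rightarrow> 'a::euclidean_space) \<Rightarrow> nat \<Rightarrow> 'a set" where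
  "mould M X m = {x. Liminf (at_right (0::real))
      (\<lambda>\<epsilon>. ereal (measure M {\<omega> \<in> space M. norm (X \<omega> - x) < \<epsilon>} / \<epsilon> ^ m)) > 0}"

definition is_norm :: "('a::real_vector \<Rightarrow> real) \<Rightarrow> bool" where
  "is_norm N \<longleftrightarrow> (\<forall>x. N x = 0 \<longleftrightarrow> x = 0) \<and> (\<forall>c x. N (c *\<^sub>R x) = \<bar>c\<bar> * N x)
     \<and> (\<forall>x y. N (x + y) \<le> N x + N y)"

end

theory Submission
  imports Defs
begin

text \<open>Every norm N on a Euclidean space is dominated by a multiple C of the Euclidean norm, so the
  small-ball bound \<open>P(norm (X - x) < \<epsilon>) \<ge> c \<epsilon>^m\<close> that defines the mould yields the same kind of
  bound for the balls of N. Along the dyadic radii \<open>\<rho>\<^sub>k = \<eta> / 2^(k+1)\<close>, the simple functions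
  \<open>\<Sum>k<J. \<rho>\<^sub>k^(-m)/2 \<cdot> 1{N(X - x) < \<rho>\<^sub>k}\<close> stay below \<open>1/N(X - x)^m\<close>, because the weights grow
  geometrically with ratio \<open>2^m \<ge> 2\<close>, while each summand has expectation at least c/2. Hence the
  expectation of \<open>1/N(X - x)^m\<close> exceeds \<open>J c/2\<close> for every J.\<close>

lemma is_norm_zero: "is_norm N \<Longrightarrow> N 0 = 0"
  unfolding is_norm_def by blast

lemma is_norm_minus:
  assumes "is_norm N" shows "N (- v) = N v"
proof -
  have "N ((-1) *\<^sub>R v) = \<bar>-1\<bar> * N v" using assms unfolding is_norm_def by blast
  then show ?thesis by simp
qed

lemma is_norm_triangle:
  assumes "is_norm N" shows "N (u + v) \<le> N u + N v"
  using assms unfolding is_norm_def by blast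

lemma is_norm_nonneg:
  assumes "is_norm N" shows "0 \<le> N v"
proof -
  have "0 = N (v + - v)" using is_norm_zero[OF assms] by simp
  also have "\<dots> \<le> N v + N (- v)" by (rule is_norm_triangle[OF assms])
  also have "\<dots> = 2 * N v" by (simp add: is_norm_minus[OF assms])
  finally show ?thesis by simp
qed

lemma is_norm_sum:
  assumes "is_norm N" shows "N (\<Sum>i\<in>S. f i) \<le> (\<Sum>i\<in>S. N (f i))"
proof (induction S rule: infinite_finite_induct)
  case (insert a S)
  then show ?case using is_norm_triangle[OF assms, of "f a" "sum f S"] by simp
qed (simp_all add: is_norm_zero[OF assms])

lemma is_norm_le_norm:
  fixes N :: "'a::euclidean_space \<Rightarrow> real"
  assumes "is_norm N"
  obtains C where "0 < C" "\<And>v. N v \<le> C * norm v"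
proof
  let ?C = "1 + (\<Sum>b\<in>Basis. N b)"
  show "0 < ?C" using is_norm_nonneg[OF assms] by (simp add: add_pos_nonneg sum_nonneg)
  fix v :: 'a
  have "N v = N (\<Sum>b\<in>Basis. (v \<bullet> b) *\<^sub>R b)" by (simp add: euclidean_representation)
  also have "\<dots> \<le> (\<Sum>b\<in>Basis. N ((v \<bullet> b) *\<^sub>R b))" by (rule is_norm_sum[OF assms])
  also have "\<dots> = (\<Sum>b\<in>Basis. \<bar>v \<bullet> b\<bar> * N b)" using assms by (simp add: is_norm_def)
  also have "\<dots> \<le> (\<Sum>b\<in>Basis. norm v * N b)"
    by (intro sum_mono mult_right_mono) (simp_all add: Basis_le_norm is_norm_nonneg[OF assms])
  also have "\<dots> \<le> ?C * norm v"
    by (simp add: sum_distrib_left algebra_simps)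
  finally show "N v \<le> ?C * norm v" .
qed

lemma is_norm_borel_measurable:
  fixes N :: "'a::euclidean_space \<Rightarrow> real"
  assumes "is_norm N" shows "N \<in> borel_measurable borel"
proof -
  obtain C where "0 < C" and le: "\<And>v. N v \<le> C * norm v"
    using is_norm_le_norm[OF assms] by blast
  have "\<bar>N u - N v\<bar> \<le> C * dist u v" for u v
  proof -
    have "N u \<le> N (u - v) + N v" "N v \<le> N (u - v) + N u"
      using is_norm_triangle[OF assms, of "u - v" v] is_norm_triangle[OF assms, of "-(u - v)" u]
        is_norm_minus[OF assms, of "u - v"] by simp_all
    then show ?thesis using le[of "u - v"] by (simp add: dist_norm)
  qed
  then have "C-lipschitz_on UNIV N"
    using \<open>0 < C\<close> by (intro lipschitz_onI) (simp_all add: dist_real_def)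
  then show ?thesis
    by (intro borel_measurable_continuous_onI lipschitz_on_continuous_on)
qed

lemma sum_atMost_power_le:
  fixes q :: real assumes "2 \<le> q" shows "(\<Sum>k\<le>j. q ^ k) \<le> 2 * q ^ j"
proof (induction j)
  case (Suc j)
  have "2 * q ^ j \<le> q * q ^ j" using assms by (intro mult_right_mono) auto
  then show ?case using Suc by simp
qed simp

lemma sum_inverse_dyadic_radii_le:
  fixes r \<eta> :: real
  assumes "1 \<le> m" "0 < r"
  shows "(\<Sum>k | k < J \<and> r < \<eta> / 2 ^ k. inverse ((\<eta> / 2 ^ k) ^ m)) \<le> 2 / r ^ m"
    (is "sum _ ?S \<le> _")
proof (cases "?S = {}")
  case True
  then show ?thesis using \<open>0 < r\<close> by (simp only: sum.empty) simp
next
  case False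
  define j where "j = Max ?S"
  have "finite ?S" by simp
  then have "r < \<eta> / 2 ^ j" and S_le: "?S \<subseteq> {..j}"
    using Max_in[OF _ False] unfolding j_def by auto
  then have "0 < \<eta> / 2 ^ j" using \<open>0 < r\<close> by linarith
  then have "0 < \<eta>" by (simp add: zero_less_divide_iff)
  have "2 \<le> (2::real) ^ m" using \<open>1 \<le> m\<close> by (metis power_one_right power_increasing one_le_numeral)
  have term_eq: "inverse ((\<eta> / 2 ^ k) ^ m) = ((2::real) ^ m) ^ k / \<eta> ^ m" for k
    by (simp add: field_simps flip: power_mult power_mult_distrib)
  have "(\<Sum>k\<in>?S. inverse ((\<eta> / 2 ^ k) ^ m)) \<le> (\<Sum>k\<le>j. ((2::real) ^ m) ^ k) / \<eta> ^ m"
    unfolding term_eq sum_divide_distrib[symmetric]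
    by (intro divide_right_mono sum_mono2 S_le) (auto simp: \<open>0 < \<eta>\<close> less_imp_le)
  also have "\<dots> \<le> 2 * ((2::real) ^ m) ^ j / \<eta> ^ m"
    by (intro divide_right_mono sum_atMost_power_le \<open>2 \<le> 2 ^ m\<close>) (use \<open>0 < \<eta>\<close> in simp)
  also have "\<dots> = 2 / (\<eta> / 2 ^ j) ^ m"
    using term_eq[of j] by (simp add: divide_inverse)
  also have "\<dots> \<le> 2 / r ^ m"
    using \<open>0 < r\<close> \<open>r < \<eta> / 2 ^ j\<close> by (intro divide_left_mono power_mono mult_pos_pos) auto
  finally show ?thesis .
qed

lemma dyadic_indicator_sum_le_inverse_power:
  fixes r \<eta> :: real
  assumes "1 \<le> m" "0 \<le> r"
  shows "(\<Sum>k<J. ennreal (inverse ((\<eta> / 2 ^ k) ^ m) / 2) * indicator {..<\<eta> / 2 ^ k} r)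
    \<le> inverse (ennreal (r ^ m))"
proof (cases "r = 0")
  case True
  then have "r ^ m = 0" using \<open>1 \<le> m\<close> by simp
  then have "inverse (ennreal (r ^ m)) = \<top>" by (simp only: ennreal_0 ennreal_inverse_zero)
  then show ?thesis by simp
next
  case False
  then have "0 < r" using \<open>0 \<le> r\<close> by simp
  let ?a = "\<lambda>k. inverse ((\<eta> / 2 ^ k) ^ m) / 2"
  have "(\<Sum>k<J. ennreal (?a k) * indicator {..<\<eta> / 2 ^ k} r)
      = (\<Sum>k<J. ennreal (if r < \<eta> / 2 ^ k then ?a k else 0))"
    by (intro sum.cong) (auto simp: indicator_def)
  also have "\<dots> = ennreal (\<Sum>k<J. if r < \<eta> / 2 ^ k then ?a k else 0)"
  proof (rule sum_ennreal)
    fix k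
    have "r < \<eta> / 2 ^ k \<Longrightarrow> 0 \<le> \<eta> / 2 ^ k" using \<open>0 < r\<close> by linarith
    then show "0 \<le> (if r < \<eta> / 2 ^ k then ?a k else 0)" by simp
  qed
  also have "\<dots> = ennreal (\<Sum>k | k < J \<and> r < \<eta> / 2 ^ k. ?a k)"
    unfolding sum.inter_filter[OF finite_lessThan, symmetric] by simp
  also have "\<dots> \<le> ennreal (inverse (r ^ m))"
  proof (intro ennreal_leI)
    have "(\<Sum>k | k < J \<and> r < \<eta> / 2 ^ k. ?a k)
        = (\<Sum>k | k < J \<and> r < \<eta> / 2 ^ k. inverse ((\<eta> / 2 ^ k) ^ m)) / 2"
      by (rule sum_divide_distrib[symmetric])
    also have "\<dots> \<le> (2 / r ^ m) / 2"
      using sum_inverse_dyadic_radii_le[OF \<open>1 \<le> m\<close> \<open>0 < r\<close>] by (rule divide_right_mono) simp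
    also have "\<dots> = inverse (r ^ m)"
      by (simp add: inverse_eq_divide)
    finally show "(\<Sum>k | k < J \<and> r < \<eta> / 2 ^ k. ?a k) \<le> inverse (r ^ m)" .
  qed
  also have "\<dots> = inverse (ennreal (r ^ m))"
    using \<open>0 < r\<close> by (simp add: inverse_ennreal)
  finally show ?thesis .
qed

lemma nn_integral_inverse_power_eq_infinity:
  fixes f :: "'b \<Rightarrow> real"
  assumes "finite_measure M" "f \<in> borel_measurable M" "\<And>\<omega>. \<omega> \<in> space M \<Longrightarrow> 0 \<le> f \<omega>"
    and "1 \<le> m" "0 < c" "0 < \<eta>"
    and small_balls: "\<And>\<epsilon>. 0 < \<epsilon> \<Longrightarrow> \<epsilon> < \<eta> \<Longrightarrow> c * \<epsilon> ^ m \<le> measure M {\<omega> \<in> space M. f \<omega> < \<epsilon>}"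
  shows "(\<integral>\<^sup>+ \<omega>. inverse (ennreal (f \<omega> ^ m)) \<partial>M) = \<infinity>"
proof -
  interpret finite_measure M by fact
  define \<rho> where "\<rho> k = \<eta> / 2 / 2 ^ k" for k :: nat
  define A where "A k = {\<omega> \<in> space M. f \<omega> < \<rho> k}" for k
  define g where "g J \<omega> = (\<Sum>k<J. ennreal (inverse (\<rho> k ^ m) / 2) * indicator (A k) \<omega>)" for J \<omega>
  have \<rho>_pos: "0 < \<rho> k" and \<rho>_less: "\<rho> k < \<eta>" for k
  proof -
    have "(1::real) \<le> 2 ^ k" by simp
    then have "1 < 2 * (2::real) ^ k" by linarith
    then show "0 < \<rho> k" "\<rho> k < \<eta>" unfolding \<rho>_def using \<open>0 < \<eta>\<close> by (auto simp: field_simps)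
  qed
  have A_sets[measurable]: "A k \<in> sets M" for k unfolding A_def using assms(2) by measurable
  have g_le: "g J \<omega> \<le> inverse (ennreal (f \<omega> ^ m))" if "\<omega> \<in> space M" for J \<omega>
  proof -
    have "g J \<omega> = (\<Sum>k<J. ennreal (inverse ((\<eta> / 2 / 2 ^ k) ^ m) / 2)
        * indicator {..<\<eta> / 2 / 2 ^ k} (f \<omega>))"
      unfolding g_def A_def \<rho>_def using that by (intro sum.cong) (auto simp: indicator_def)
    also have "\<dots> \<le> inverse (ennreal (f \<omega> ^ m))"
      by (rule dyadic_indicator_sum_le_inverse_power[OF \<open>1 \<le> m\<close> assms(3)[OF that]])
    finally show ?thesis .
  qed
  have g_ge: "of_nat J * ennreal (c / 2) \<le> (\<integral>\<^sup>+ \<omega>. g J \<omega> \<partial>M)" for J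
  proof -
    have "ennreal (c / 2) \<le> ennreal (inverse (\<rho> k ^ m) / 2) * emeasure M (A k)" for k
    proof -
      have "c * \<rho> k ^ m \<le> measure M (A k)"
        unfolding A_def using small_balls[OF \<rho>_pos \<rho>_less] .
      then have "c / 2 \<le> inverse (\<rho> k ^ m) / 2 * measure M (A k)"
        using \<rho>_pos[of k] by (simp add: field_simps)
      then show ?thesis
        using \<rho>_pos[of k] by (simp add: emeasure_eq_measure ennreal_mult'[symmetric] ennreal_leI)
    qed
    then have "of_nat J * ennreal (c / 2) \<le> (\<Sum>k<J. ennreal (inverse (\<rho> k ^ m) / 2) * emeasure M (A k))"
      using sum_mono[of "{..<J}" "\<lambda>_. ennreal (c / 2)"] by simp
    also have "\<dots> = (\<integral>\<^sup>+ \<omega>. g J \<omega> \<partial>M)"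
      unfolding g_def
      by (subst nn_integral_sum) (measurable, simp add: A_sets nn_integral_cmult_indicator)
    finally show ?thesis .
  qed
  have "of_nat J * ennreal (c / 2) \<le> (\<integral>\<^sup>+ \<omega>. inverse (ennreal (f \<omega> ^ m)) \<partial>M)" for J
    using g_ge[of J] nn_integral_mono[OF g_le] by (rule order_trans)
  then have "(SUP J. of_nat J) * ennreal (c / 2) \<le> (\<integral>\<^sup>+ \<omega>. inverse (ennreal (f \<omega> ^ m)) \<partial>M)"
    by (simp add: SUP_mult_right_ennreal SUP_least)
  then show ?thesis
    using \<open>0 < c\<close> by (simp add: ennreal_SUP_of_nat_eq_top top_unique)
qed

lemma measure_small_ball_dominated:
  fixes f g :: "'b \<Rightarrow> real"
  assumes "finite_measure M" "g \<in> borel_measurable M" "0 < C"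
    and "\<And>\<omega>. \<omega> \<in> space M \<Longrightarrow> g \<omega> \<le> C * f \<omega>"
    and "c * (\<epsilon> / C) ^ m \<le> measure M {\<omega> \<in> space M. f \<omega> < \<epsilon> / C}"
  shows "c / C ^ m * \<epsilon> ^ m \<le> measure M {\<omega> \<in> space M. g \<omega> < \<epsilon>}"
proof -
  have "c / C ^ m * \<epsilon> ^ m = c * (\<epsilon> / C) ^ m" by (simp add: power_divide)
  also have "\<dots> \<le> measure M {\<omega> \<in> space M. f \<omega> < \<epsilon> / C}" by fact
  also have "\<dots> \<le> measure M {\<omega> \<in> space M. g \<omega> < \<epsilon>}"
  proof (rule finite_measure.finite_measure_mono[OF assms(1)])
    show "{\<omega> \<in> space M. f \<omega> < \<epsilon> / C} \<subseteq> {\<omega> \<in> space M. g \<omega> < \<epsilon>}"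
      using assms(3,4) by (auto simp: field_simps intro: le_less_trans)
    show "{\<omega> \<in> space M. g \<omega> < \<epsilon>} \<in> sets M"
      using assms(2) by measurable
  qed
  finally show ?thesis .
qed

lemma mould_small_ball_bound:
  assumes "x \<in> mould M X m"
  obtains c \<delta> :: real where "0 < c" "0 < \<delta>"
    "\<And>\<epsilon>. 0 < \<epsilon> \<Longrightarrow> \<epsilon> < \<delta> \<Longrightarrow> c * \<epsilon> ^ m \<le> measure M {\<omega> \<in> space M. norm (X \<omega> - x) < \<epsilon>}"
proof -
  let ?q = "\<lambda>\<epsilon>. ereal (measure M {\<omega> \<in> space M. norm (X \<omega> - x) < \<epsilon>} / \<epsilon> ^ m)"
  have "0 < Liminf (at_right 0) ?q" using assms unfolding mould_def by simp
  then obtain c where "0 < ereal c" "ereal c < Liminf (at_right 0) ?q"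
    using ereal_dense2 by blast
  then have "eventually (\<lambda>\<epsilon>. ereal c < ?q \<epsilon>) (at_right 0)" by (intro less_LiminfD)
  then obtain \<delta> where "0 < \<delta>" and q_gt: "\<And>\<epsilon>. 0 < \<epsilon> \<Longrightarrow> \<epsilon> < \<delta> \<Longrightarrow> ereal c < ?q \<epsilon>"
    unfolding eventually_at_right_field by auto
  show ?thesis
  proof
    show "0 < c" using \<open>0 < ereal c\<close> by simp
    fix \<epsilon> :: real assume "0 < \<epsilon>" "\<epsilon> < \<delta>"
    then show "c * \<epsilon> ^ m \<le> measure M {\<omega> \<in> space M. norm (X \<omega> - x) < \<epsilon>}"
      using q_gt[of \<epsilon>] by (simp add: field_simps)
  qed fact
qed

theorem mainTheorem4:
  fixes M :: "'b measure" and X :: "'b \<Rightarrow> 'a::euclidean_space"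
    and m :: nat and x :: 'a and N :: "'a \<Rightarrow> real"
  assumes "prob_space M"
    and "X \<in> borel_measurable M"
    and "m \<ge> 1"
    and "x \<in> mould M X m"
    and "is_norm N"
  shows "(\<integral>\<^sup>+ \<omega>. inverse (ennreal (N (X \<omega> - x) ^ m)) \<partial>M) = \<infinity>"
proof -
  interpret prob_space M by fact
  obtain c \<delta> where "0 < c" "0 < \<delta>" and euclidean_balls:
    "\<And>\<epsilon>. 0 < \<epsilon> \<Longrightarrow> \<epsilon> < \<delta> \<Longrightarrow> c * \<epsilon> ^ m \<le> measure M {\<omega> \<in> space M. norm (X \<omega> - x) < \<epsilon>}"
    using mould_small_ball_bound[OF assms(4)] by blast
  obtain C where "0 < C" and N_le: "\<And>v. N v \<le> C * norm v"
    using is_norm_le_norm[OF assms(5)] by blast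
  have N_measurable[measurable]: "N \<in> borel_measurable borel"
    using is_norm_borel_measurable[OF assms(5)] .
  have "c / C ^ m * \<epsilon> ^ m \<le> measure M {\<omega> \<in> space M. N (X \<omega> - x) < \<epsilon>}"
    if "0 < \<epsilon>" "\<epsilon> < C * \<delta>" for \<epsilon>
    using that \<open>0 < C\<close> assms(2)
    by (intro measure_small_ball_dominated[where f = "\<lambda>\<omega>. norm (X \<omega> - x)"] euclidean_balls N_le)
      (simp_all add: finite_measure_axioms field_simps)
  with assms(2,3) \<open>0 < c\<close> \<open>0 < C\<close> \<open>0 < \<delta>\<close> show ?thesis
    by (intro nn_integral_inverse_power_eq_infinity[where c = "c / C ^ m" and \<eta> = "C * \<delta>"])
      (simp_all add: finite_measure_axioms is_norm_nonneg[OF assms(5)])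
qed

end
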